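(* Let $P$ be a finite graded bowtie-free poset of rank $n$ with $\hat0$ and $\hat1$ equipped with a good $\mathcal{H}_n(0)$ action $U_1,\dots,U_{n-1}$. Let $\mathfrak m'$ be a maximal chain of $P$ and $i\in[n-1]$ with $U_i(\mathfrak m')\ne\mathfrak m'$. Then there is no finite sequence $i_1,\dots,i_r$ in $[n-1]$ with $U_{i_1}U_{i_2}\cdots U_{i_r}U_i(\mathfrak m')=\mathfrak m'$.
   Context: Bowtie-free: no distinct $a,b,c,d$ with $a$ and $b$ each covering both $c$ and $d$. $\mathcal{M}(P)$ is the set of maximal chains. A good $\mathcal{H}_n(0)$ action is a family of maps $U_1,\dots,U_{n-1}:\mathcal{M}(P)\to\mathcal{M}(P)$ with: (1) $U_i(\mathfrak m)$ agrees with $\mathfrak m$ except possibly at rank $i$; (2) $U_i^2=U_i$; (3) $U_iU_j=U_jU_i$ for $|i-j|\ge2$; (4) $U_iU_{i+1}U_i=U_{i+1}U_iU_{i+1}$; (5) $\omega F_P(x)=\mathrm{ch}(\chi_P)$, where $\chi_P$ is the character of the representation of the 0-Hecke algebra $\mathcal{H}_n(0)$ on $\mathbb{C}\mathcal{M}(P)$ with $T_i$ acting as $-U_i$; $F_P(x)=\sum x_1^{\mathrm{rk}(t_0,t_1)}\cdots x_k^{\mathrm{rk}(t_{k-1},t_k)}$ over multichains $\hat0=t_0\le\cdots\le t_{k-1}<t_k=\hat1$; $L_{S,n}=\sum_{1\le i_1\le\cdots\le i_n,\ i_j<i_{j+1}\ (j\in S)}x_{i_1}\cdots x_{i_n}$;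 $\omega(L_{S,n})=L_{[n-1]\setminus S,n}$; $\mathrm{ch}$ is linear with $\mathrm{ch}(\chi_S)=L_{S,n}$ where $\chi_S$ is the character of the one-dimensional representation $T_i\mapsto-1$ ($i\in S$), $T_i\mapsto 0$ ($i\notin S$). *)

theory Defs
  imports Main
begin

definition poset_on :: "'a set \<Rightarrow> ('a \<Rightarrow> 'a \<Rightarrow> bool) \<Rightarrow> bool" where
  "poset_on P le \<longleftrightarrow>
     (\<forall>x\<in>P. le x x) \<and>
     (\<forall>x\<in>P. \<forall>y\<in>P. le x y \<and> le y x \<longrightarrow> x = y) \<and>
     (\<forall>x\<in>P. \<forall>y\<in>P. \<forall>z\<in>P. le x y \<and> le y z \<longrightarrow> le x z)"

definition lt :: "('a \<Rightarrow> 'a \<Rightarrow> bool) \<Rightarrow> 'a \<Rightarrow> 'a \<Rightarrow> bool" where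
  "lt le x y \<longleftrightarrow> le x y \<and> x \<noteq> y"

definition covers :: "'a set \<Rightarrow> ('a \<Rightarrow> 'a \<Rightarrow> bool) \<Rightarrow> 'a \<Rightarrow> 'a \<Rightarrow> bool" where
  "covers P le x y \<longleftrightarrow> x \<in> P \<and> y \<in> P \<and> lt le x y \<and>
     \<not> (\<exists>z\<in>P. lt le x z \<and> lt le z y)"

definition is_bottom :: "'a set \<Rightarrow> ('a \<Rightarrow> 'a \<Rightarrow> bool) \<Rightarrow> 'a \<Rightarrow> bool" where
  "is_bottom P le z \<longleftrightarrow> z \<in> P \<and> (\<forall>x\<in>P. le z x)"

definition is_top :: "'a set \<Rightarrow> ('a \<Rightarrow> 'a \<Rightarrow> bool) \<Rightarrow> 'a \<Rightarrow> bool" where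
  "is_top P le z \<longleftrightarrow> z \<in> P \<and> (\<forall>x\<in>P. le x z)"

definition chain_on :: "('a \<Rightarrow> 'a \<Rightarrow> bool) \<Rightarrow> 'a set \<Rightarrow> bool" where
  "chain_on le C \<longleftrightarrow> (\<forall>x\<in>C. \<forall>y\<in>C. le x y \<or> le y x)"

definition maximal_chains :: "'a set \<Rightarrow> ('a \<Rightarrow> 'a \<Rightarrow> bool) \<Rightarrow> 'a set set" where
  "maximal_chains P le = {C. C \<subseteq> P \<and> chain_on le C \<and>
      (\<forall>D. C \<subseteq> D \<and> D \<subseteq> P \<and> chain_on le D \<longrightarrow> D = C)}"

text \<open>Graded of rank n: every maximal chain has length n (n+1 elements).\<close>
definition graded_of_rank :: "'a set \<Rightarrow> ('a \<Rightarrow> 'a \<Rightarrow> bool) \<Rightarrow> nat \<Rightarrow> bool" where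
  "graded_of_rank P le n \<longleftrightarrow> (\<forall>C\<in>maximal_chains P le. card C = n + 1)"

definition is_rank_function ::
  "'a set \<Rightarrow> ('a \<Rightarrow> 'a \<Rightarrow> bool) \<Rightarrow> 'a \<Rightarrow> ('a \<Rightarrow> nat) \<Rightarrow> bool" where
  "is_rank_function P le z0 rk \<longleftrightarrow> rk z0 = 0 \<and>
     (\<forall>x\<in>P. \<forall>y\<in>P. covers P le x y \<longrightarrow> rk y = rk x + 1)"

definition bowtie_free :: "'a set \<Rightarrow> ('a \<Rightarrow> 'a \<Rightarrow> bool) \<Rightarrow> bool" where
  "bowtie_free P le \<longleftrightarrow> \<not> (\<exists>a\<in>P. \<exists>b\<in>P. \<exists>c\<in>P. \<exists>d\<in>P.
      distinct [a, b, c, d] \<and> covers P le c a \<and> covers P le d a \<and>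
      covers P le c b \<and> covers P le d b)"

definition Uword :: "(nat \<Rightarrow> 'a set \<Rightarrow> 'a set) \<Rightarrow> nat list \<Rightarrow> 'a set \<Rightarrow> 'a set" where
  "Uword U w = foldr (\<lambda>i f. U i \<circ> f) w id"

text \<open>A formal power series in x_1, x_2, ... is represented by the map sending an
  exponent vector m (m j = exponent of x_j) to the coefficient of x^m.\<close>

text \<open>Coefficient of x^m in F_P: number of multichains
  t_0 = bot <= t_1 <= ... <= t_(k-1) < t_k = top (a list of length k+1) with
  rk(t_j) - rk(t_(j-1)) = m j for 1 <= j <= k and m j = 0 otherwise.\<close>
definition F_coeff :: "'a set \<Rightarrow> ('a \<Rightarrow> 'a \<Rightarrow> bool) \<Rightarrow> ('a \<Rightarrow> nat) \<Rightarrow> 'a \<Rightarrow> 'a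
    \<Rightarrow> (nat \<Rightarrow> nat) \<Rightarrow> nat" where
  "F_coeff P le rk z0 z1 m = card {t. \<exists>k. k \<ge> 1 \<and> length t = k + 1 \<and> set t \<subseteq> P \<and>
      t ! 0 = z0 \<and> t ! k = z1 \<and>
      (\<forall>j<k. le (t ! j) (t ! (j + 1))) \<and> lt le (t ! (k - 1)) (t ! k) \<and>
      (\<forall>j. m j = (if 1 \<le> j \<and> j \<le> k then rk (t ! j) - rk (t ! (j - 1)) else 0))}"

text \<open>Coefficient of x^m in L_{S,n}: number of sequences 1 <= i_1 <= ... <= i_n
  with i_j < i_(j+1) for j in S and x_(i_1)...x_(i_n) = x^m
  (list entry i ! (j-1) is i_j).\<close>
definition L_coeff :: "nat set \<Rightarrow> nat \<Rightarrow> (nat \<Rightarrow> nat) \<Rightarrow> nat" where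
  "L_coeff S n m = card {i. length i = n \<and> (\<forall>j<n. 1 \<le> i ! j) \<and>
      (\<forall>j. j + 1 < n \<longrightarrow> i ! j \<le> i ! (j + 1)) \<and>
      (\<forall>j\<in>S. 1 \<le> j \<and> j < n \<longrightarrow> i ! (j - 1) < i ! j) \<and>
      (\<forall>k. m k = card {j. j < n \<and> i ! j = k})}"

text \<open>Characters are evaluated on the elements T_{w1} T_{w2} ... T_{wr} (words w over
  [n-1]); these span H_n(0), so a character is determined by these values.
  chi_P: T_i acts on the basis M(P) of C M(P) as -U_i, so the trace of
  T_{w1}...T_{wr} is (-1)^r times the number of maximal chains fixed by
  U_{w1} o ... o U_{wr}.\<close>
definition chi_P :: "'a set \<Rightarrow> ('a \<Rightarrow> 'a \<Rightarrow> bool) \<Rightarrow> (nat \<Rightarrow> 'a set \<Rightarrow> 'a set)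
    \<Rightarrow> nat list \<Rightarrow> int" where
  "chi_P P le U w = (-1) ^ length w * int (card {C \<in> maximal_chains P le. Uword U w C = C})"

text \<open>chi_S: the one-dimensional representation T_i -> -1 (i in S), T_i -> 0 (i not in S).\<close>
definition chi_S :: "nat set \<Rightarrow> nat list \<Rightarrow> int" where
  "chi_S S w = (\<Prod>j\<leftarrow>w. if j \<in> S then -1 else 0)"

definition good_action :: "'a set \<Rightarrow> ('a \<Rightarrow> 'a \<Rightarrow> bool) \<Rightarrow> ('a \<Rightarrow> nat) \<Rightarrow> 'a \<Rightarrow> 'a
    \<Rightarrow> nat \<Rightarrow> (nat \<Rightarrow> 'a set \<Rightarrow> 'a set) \<Rightarrow> bool" where
  "good_action P le rk z0 z1 n U \<longleftrightarrow>
     (let M = maximal_chains P le; I = {1..<n} in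
       (\<forall>i\<in>I. \<forall>C\<in>M. U i C \<in> M) \<and>
       (\<forall>i\<in>I. \<forall>C\<in>M. \<forall>j. j \<noteq> i \<longrightarrow> {x \<in> U i C. rk x = j} = {x \<in> C. rk x = j}) \<and>
       (\<forall>i\<in>I. \<forall>C\<in>M. U i (U i C) = U i C) \<and>
       (\<forall>i\<in>I. \<forall>j\<in>I. \<forall>C\<in>M. (i + 2 \<le> j \<or> j + 2 \<le> i) \<longrightarrow> U i (U j C) = U j (U i C)) \<and>
       (\<forall>i\<in>I. i + 1 \<in> I \<longrightarrow> (\<forall>C\<in>M. U i (U (i+1) (U i C)) = U (i+1) (U i (U (i+1) C)))) \<and>
       \<comment> \<open>(5): omega F_P = ch(chi_P), with F_P = sum_S d_S L_{S,n} and
           chi_P = sum_S c_S chi_S\<close>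
       (\<exists>d c :: nat set \<Rightarrow> int.
          (\<forall>m. int (F_coeff P le rk z0 z1 m) = (\<Sum>S\<in>Pow I. d S * int (L_coeff S n m))) \<and>
          (\<forall>w. set w \<subseteq> I \<longrightarrow> chi_P P le U w = (\<Sum>S\<in>Pow I. c S * chi_S S w)) \<and>
          (\<forall>m. (\<Sum>S\<in>Pow I. d S * int (L_coeff (I - S) n m))
               = (\<Sum>S\<in>Pow I. c S * int (L_coeff S n m)))))"

end

theory Submission
  imports Defs
begin

(* By axiom (5) the character of the representation on T_w is (-1)^|w| times the
   number of maximal chains fixed by U_w, and it is an integer combination of the
   one-dimensional characters chi_S, whose value on T_w only depends on the set of
   letters of w.  Hence the number of chains fixed by U_w only depends on supp w.
   For J = supp w, the longest element of the parabolic 0-Hecke monoid generated by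
   the U_j, j in J, is absorbing (U_j e = e), so its fixed chains are exactly those
   fixed by every U_j, j in J; these are fixed by U_w as well.  Comparing cardinalities,
   every chain fixed by U_w is fixed by each U_j with j in J.  For the word w i, which
   fixes m' by assumption, this gives U_i m' = m'. *)

lemma Uword_Nil [simp]: "Uword U [] C = C"
  by (simp add: Uword_def)

lemma Uword_Cons [simp]: "Uword U (j # w) C = U j (Uword U w C)"
  by (simp add: Uword_def)

lemma Uword_append [simp]: "Uword U (v @ w) C = Uword U v (Uword U w C)"
  by (induction v) auto

lemma Uword_fixed: "(\<And>j. j \<in> set w \<Longrightarrow> U j C = C) \<Longrightarrow> Uword U w C = C"
  by (induction w) auto

text \<open>As Uword applies the last letter first, parabolic_word J k is a reduced word for the
  longest element of the parabolic 0-Hecke monoid generated by J \<inter> {1..k}.\<close>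

fun block_word :: "nat set \<Rightarrow> nat \<Rightarrow> nat list" where
  "block_word J 0 = []"
| "block_word J (Suc k) = (if Suc k \<in> J then block_word J k @ [Suc k] else [])"

fun parabolic_word :: "nat set \<Rightarrow> nat \<Rightarrow> nat list" where
  "parabolic_word J 0 = []"
| "parabolic_word J (Suc k) =
     (if Suc k \<in> J then block_word J (Suc k) @ parabolic_word J k else parabolic_word J k)"

lemma block_word_eq_upt:
  assumes "0 \<notin> J"
  shows "\<exists>a. 0 < a \<and> a \<le> Suc k \<and> block_word J k = [a..<Suc k] \<and>
    {a..k} \<subseteq> J \<and> a - 1 \<notin> J"
proof (induction k)
  case 0
  show ?case using assms by (intro exI[of _ 1]) auto
next
  case (Suc k)
  show ?case
  proof (cases "Suc k \<in> J")
    case True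
    with Suc.IH obtain a where "0 < a" "a \<le> Suc k" "block_word J k = [a..<Suc k]"
      "{a..k} \<subseteq> J" "a - 1 \<notin> J" by blast
    with True show ?thesis by (intro exI[of _ a]) (auto simp: le_Suc_eq)
  next
    case False
    then show ?thesis by (intro exI[of _ "Suc (Suc k)"]) auto
  qed
qed

lemma set_parabolic_word:
  assumes "0 \<notin> J"
  shows "set (parabolic_word J k) = J \<inter> {1..k}"
proof (induction k)
  case 0
  then show ?case by simp
next
  case (Suc k)
  obtain a where a: "0 < a" "a \<le> Suc (Suc k)" "block_word J (Suc k) = [a..<Suc (Suc k)]"
    "{a..Suc k} \<subseteq> J" "a - 1 \<notin> J"
    using block_word_eq_upt[OF assms] by blast
  show ?case
  proof (cases "Suc k \<in> J")
    case True
    with a(2,5) have "a \<le> Suc k" by (cases "a = Suc (Suc k)") auto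
    have "set (parabolic_word J (Suc k)) = {a..Suc k} \<union> (J \<inter> {1..k})"
      using True a(3) Suc.IH
      by (simp del: block_word.simps upt_Suc add: atLeastLessThanSuc_atLeastAtMost)
    also have "\<dots> = J \<inter> {1..Suc k}"
      using True a(1,4) \<open>a \<le> Suc k\<close> by (auto simp: le_Suc_eq)
    finally show ?thesis .
  next
    case False
    with Suc.IH show ?thesis by (simp add: atLeastAtMostSuc_conv)
  qed
qed

locale zero_hecke_action =
  fixes M :: "'c set set" and U :: "nat \<Rightarrow> 'c set \<Rightarrow> 'c set" and n :: nat
  assumes U_closed: "i \<in> {1..<n} \<Longrightarrow> C \<in> M \<Longrightarrow> U i C \<in> M"
    and U_idem: "i \<in> {1..<n} \<Longrightarrow> C \<in> M \<Longrightarrow> U i (U i C) = U i C"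
    and U_commute: "i \<in> {1..<n} \<Longrightarrow> j \<in> {1..<n} \<Longrightarrow> C \<in> M \<Longrightarrow> i + 2 \<le> j \<or> j + 2 \<le> i
      \<Longrightarrow> U i (U j C) = U j (U i C)"
    and U_braid: "i \<in> {1..<n} \<Longrightarrow> i + 1 \<in> {1..<n} \<Longrightarrow> C \<in> M \<Longrightarrow>
      U i (U (i + 1) (U i C)) = U (i + 1) (U i (U (i + 1) C))"
begin

lemma Uword_closed: "set w \<subseteq> {1..<n} \<Longrightarrow> C \<in> M \<Longrightarrow> Uword U w C \<in> M"
  by (induction w) (auto intro: U_closed)

lemma U_Uword_commute:
  "j \<in> {1..<n} \<Longrightarrow> set w \<subseteq> {1..<n} \<Longrightarrow> (\<And>l. l \<in> set w \<Longrightarrow> l + 2 \<le> j \<or> j + 2 \<le> l)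
    \<Longrightarrow> C \<in> M \<Longrightarrow> U j (Uword U w C) = Uword U w (U j C)"
proof (induction w)
  case Nil
  then show ?case by simp
next
  case (Cons l w)
  then have "U j (U l (Uword U w C)) = U l (U j (Uword U w C))"
    by (intro U_commute) (auto simp: Uword_closed)
  with Cons show ?case by simp
qed

lemma U_Uword_upt_first:
  assumes "0 < a" "a \<le> k" "k < n" "C \<in> M"
  shows "U a (Uword U [a..<Suc k] C) = Uword U [a..<Suc k] C"
proof -
  have word: "[a..<Suc k] = a # [Suc a..<Suc k]" using assms by (intro upt_conv_Cons) simp
  have "Uword U [Suc a..<Suc k] C \<in> M" using assms by (intro Uword_closed) auto
  with assms show ?thesis unfolding word by (simp add: U_idem del: upt_Suc)
qed

lemma U_Uword_upt_shift:
  assumes "0 < a" "a < j" "j \<le> k" "k < n" "C \<in> M"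
  shows "U j (Uword U [a..<Suc k] C) = Uword U [a..<Suc k] (U (j - 1) C)"
proof -
  define low where "low = [a..<j - 1]"
  define high where "high = [Suc j..<Suc k]"
  have split: "[a..<Suc k] = low @ [j - 1, j] @ high"
    using assms upt_add_eq_append[of a "j - 1" "k + 2 - j"]
    by (simp add: low_def high_def upt_conv_Cons)
  have low: "set low \<subseteq> {1..<n}" "\<And>l. l \<in> set low \<Longrightarrow> l + 2 \<le> j \<or> j + 2 \<le> l"
    using assms by (auto simp: low_def)
  have high: "set high \<subseteq> {1..<n}" "\<And>l. l \<in> set high \<Longrightarrow> l + 2 \<le> j - 1 \<or> j - 1 + 2 \<le> l"
    using assms by (auto simp: high_def)
  have I: "j - 1 \<in> {1..<n}" "j \<in> {1..<n}" using assms by auto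
  have X: "Uword U high C \<in> M" using high assms by (intro Uword_closed)
  have "U j (Uword U [a..<Suc k] C) = Uword U low (U j (U (j - 1) (U j (Uword U high C))))"
    unfolding split using low I X by (simp add: U_Uword_commute U_closed)
  also have "U j (U (j - 1) (U j (Uword U high C))) =
      U (j - 1) (U j (U (j - 1) (Uword U high C)))"
    using U_braid[of "j - 1" "Uword U high C"] I X by simp
  also have "U (j - 1) (Uword U high C) = Uword U high (U (j - 1) C)"
    using U_Uword_commute[OF I(1) high] assms by simp
  finally show ?thesis unfolding split by simp
qed

lemma U_Uword_parabolic_word:
  assumes "J \<subseteq> {1..<n}" "j \<in> J" "j \<le> k" "C \<in> M"
  shows "U j (Uword U (parabolic_word J k) C) = Uword U (parabolic_word J k) C"
  using assms(2,3)
proof (induction k arbitrary: j)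
  case 0
  then show ?case using assms(1) by auto
next
  case (Suc k)
  show ?case
  proof (cases "Suc k \<in> J")
    case False
    with Suc.prems have "j \<le> k" by (auto simp: le_Suc_eq)
    with Suc False show ?thesis by simp
  next
    case True
    have "0 \<notin> J" using assms(1) by auto
    then obtain a where a: "0 < a" "a \<le> Suc (Suc k)" "block_word J (Suc k) = [a..<Suc (Suc k)]"
      "{a..Suc k} \<subseteq> J" "a - 1 \<notin> J"
      using block_word_eq_upt by blast
    have "a \<le> Suc k" using True a(2,5) by (cases "a = Suc (Suc k)") auto
    define D where "D = Uword U (parabolic_word J k) C"
    have D: "D \<in> M"
      unfolding D_def using assms set_parabolic_word[OF \<open>0 \<notin> J\<close>] by (intro Uword_closed) auto
    have n: "Suc k < n" using True assms(1) by auto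
    have word: "Uword U (parabolic_word J (Suc k)) C = Uword U [a..<Suc (Suc k)] D"
      using True a by (simp add: D_def)
    have "j + 1 \<noteq> a" using Suc.prems(1) a(5) by auto
    then consider "j = a" | "a < j" | "j + 2 \<le> a" by (cases "j = a"; cases "a < j") auto
    then show ?thesis
    proof cases
      case 1
      then show ?thesis unfolding word using U_Uword_upt_first \<open>a \<le> Suc k\<close> a(1) n D by blast
    next
      case 2
      have "j - 1 \<in> {a..Suc k}" using 2 Suc.prems(2) by auto
      with a(4) have "U (j - 1) D = D" unfolding D_def using 2 Suc.prems by (intro Suc.IH) auto
      with 2 show ?thesis unfolding word using U_Uword_upt_shift a(1) Suc.prems(2) n D by metis
    next
      case 3
      have "U j D = D" unfolding D_def using 3 Suc.prems \<open>a \<le> Suc k\<close> by (intro Suc.IH) auto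
      moreover have "U j (Uword U [a..<Suc (Suc k)] D) = Uword U [a..<Suc (Suc k)] (U j D)"
        using 3 Suc.prems a(1) n assms(1) D by (intro U_Uword_commute) auto
      ultimately show ?thesis unfolding word by simp
    qed
  qed
qed

lemma fixed_parabolic_word_iff:
  assumes "J \<subseteq> {1..<n}" "C \<in> M"
  shows "Uword U (parabolic_word J (n - 1)) C = C \<longleftrightarrow> (\<forall>j\<in>J. U j C = C)"
proof
  assume fixed: "Uword U (parabolic_word J (n - 1)) C = C"
  show "\<forall>j\<in>J. U j C = C"
  proof
    fix j assume "j \<in> J"
    with assms have "j < n" by auto
    with assms \<open>j \<in> J\<close>
    have "U j (Uword U (parabolic_word J (n - 1)) C) = Uword U (parabolic_word J (n - 1)) C"
      by (intro U_Uword_parabolic_word) auto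
    then show "U j C = C" using fixed by simp
  qed
next
  assume "\<forall>j\<in>J. U j C = C"
  moreover have "set (parabolic_word J (n - 1)) \<subseteq> J"
    using assms(1) by (subst set_parabolic_word) auto
  ultimately show "Uword U (parabolic_word J (n - 1)) C = C"
    by (intro Uword_fixed) auto
qed

end

lemma finite_maximal_chains: "finite P \<Longrightarrow> finite (maximal_chains P le)"
  unfolding maximal_chains_def by (rule finite_subset[of _ "Pow P"]) auto

lemma zero_hecke_action_maximal_chains:
  "good_action P le rk z0 z1 n U \<Longrightarrow> zero_hecke_action (maximal_chains P le) U n"
  unfolding good_action_def Let_def zero_hecke_action_def
  by (elim conjE) (intro conjI allI impI; meson)

lemma chi_S_eq: "chi_S S w = (if set w \<subseteq> S then (-1) ^ length w else 0)"
  unfolding chi_S_def by (induction w) auto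

lemma card_fixed_Uword_eq:
  assumes "good_action P le rk z0 z1 n U" "set v \<subseteq> {1..<n}" "set w = set v"
  shows "card {C \<in> maximal_chains P le. Uword U w C = C} =
    card {C \<in> maximal_chains P le. Uword U v C = C}"
proof -
  obtain c where c: "\<forall>u. set u \<subseteq> {1..<n} \<longrightarrow>
      chi_P P le U u = (\<Sum>S\<in>Pow {1..<n}. c S * chi_S S u)"
    using assms(1) unfolding good_action_def Let_def by (elim conjE exE) meson
  have count: "int (card {C \<in> maximal_chains P le. Uword U u C = C}) =
      (\<Sum>S\<in>Pow {1..<n}. if set u \<subseteq> S then c S else 0)" if "set u \<subseteq> {1..<n}" for u
  proof -
    have "(-1) ^ length u * int (card {C \<in> maximal_chains P le. Uword U u C = C}) =
        (-1) ^ length u * (\<Sum>S\<in>Pow {1..<n}. if set u \<subseteq> S then c S else 0)"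
      using c that unfolding chi_P_def
      by (simp add: chi_S_eq sum_distrib_left if_distrib mult.commute cong: if_cong)
    then show ?thesis by simp
  qed
  show ?thesis using count[of v] count[of w] assms(2,3) by simp
qed

lemma fixed_by_Uword_imp_fixed_by_letters:
  assumes "finite P" "good_action P le rk z0 z1 n U" "set w \<subseteq> {1..<n}"
    and "C \<in> maximal_chains P le" "Uword U w C = C" "j \<in> set w"
  shows "U j C = C"
proof -
  define M where "M = maximal_chains P le"
  define W where "W = parabolic_word (set w) (n - 1)"
  define fixed where "fixed = {C \<in> M. Uword U w C = C}"
  define stable where "stable = {C \<in> M. \<forall>j\<in>set w. U j C = C}"
  interpret zero_hecke_action M U n
    unfolding M_def using assms(2) by (rule zero_hecke_action_maximal_chains)
  have set_W: "set W = set w" unfolding W_def using assms(3) by (subst set_parabolic_word) fastforce+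
  have "card fixed = card {C \<in> M. Uword U W C = C}"
    unfolding fixed_def M_def
    by (rule card_fixed_Uword_eq[OF assms(2)]) (use assms(3) set_W in simp_all)
  also have "{C \<in> M. Uword U W C = C} = stable"
    unfolding W_def stable_def using fixed_parabolic_word_iff[OF assms(3)] by blast
  finally have "card fixed = card stable" .
  moreover have "stable \<subseteq> fixed"
    unfolding stable_def fixed_def using Uword_fixed[of w U] by blast
  moreover have "finite fixed" using finite_maximal_chains[OF assms(1)] by (simp add: fixed_def M_def)
  ultimately have "stable = fixed" by (simp add: card_subset_eq)
  moreover have "C \<in> fixed" using assms(4,5) by (simp add: fixed_def M_def)
  ultimately have "C \<in> stable" by simp
  with assms(6) show ?thesis by (simp add: stable_def)
qed

theorem mainTheorem9:
  fixes P :: "'a set" and le :: "'a \<Rightarrow> 'a \<Rightarrow> bool" and n :: nat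
    and z0 z1 :: 'a and rk :: "'a \<Rightarrow> nat" and U :: "nat \<Rightarrow> 'a set \<Rightarrow> 'a set"
    and m' :: "'a set" and i :: nat
  assumes "finite P" and "poset_on P le"
    and "is_bottom P le z0" and "is_top P le z1"
    and "graded_of_rank P le n" and "is_rank_function P le z0 rk"
    and "bowtie_free P le"
    and "good_action P le rk z0 z1 n U"
    and "m' \<in> maximal_chains P le" and "i \<in> {1..<n}" and "U i m' \<noteq> m'"
  shows "\<not> (\<exists>w. set w \<subseteq> {1..<n} \<and> Uword U w (U i m') = m')"
proof
  assume "\<exists>w. set w \<subseteq> {1..<n} \<and> Uword U w (U i m') = m'"
  then obtain w where "set w \<subseteq> {1..<n}" "Uword U w (U i m') = m'" by blast
  with assms(9,10) have "U i m' = m'"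
    by (intro fixed_by_Uword_imp_fixed_by_letters[OF assms(1,8), of "w @ [i]"]) auto
  with assms(11) show False by contradiction
qed

end
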